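(* Let $p,q\geq1$ be integers, $\alpha_0=\arctan\sqrt{q/p}$ and $P_1=(\alpha_0,\alpha_0+\pi)$. Let $(\vartheta(s),\alpha(s))$ be a trajectory of the differential system $$\dot\vartheta=3\sin\vartheta\cos\vartheta\sin(\alpha-\vartheta),\qquad \dot\alpha=q\cos\alpha\cos\vartheta-p\sin\alpha\sin\vartheta,$$ and suppose that for some $s_0$ one has $0<\vartheta(s_0)<\pi/2$ and $\vartheta(s_0)+\pi/2\leq\alpha(s_0)\leq\vartheta(s_0)+3\pi/2$. Then $\lim_{s\to-\infty}(\vartheta(s),\alpha(s))=P_1$. *)

theory Defs
  imports "HOL-Analysis.Analysis"
begin

end

theory Submission
  imports Defs
begin

text \<open>Write \<open>\<phi> = \<alpha> - \<vartheta>\<close>. On the region \<open>0 < \<vartheta> < \<pi>/2\<close>, \<open>\<pi>/2 < \<phi> < 3\<pi>/2\<close> the function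
  \<open>E = - p ln cos \<vartheta> - q ln sin \<vartheta> - 3 ln (- cos \<phi>)\<close> is nondecreasing along trajectories, with
  \<open>E' = 3 (p + q + 3) sin \<vartheta> cos \<vartheta> sin\<^sup>2 \<phi> / (- cos \<phi>)\<close>. Backwards in time \<open>E\<close> stays below its
  value at an entry point, which keeps \<open>sin \<vartheta>\<close>, \<open>cos \<vartheta>\<close> and \<open>- cos \<phi>\<close> away from \<open>0\<close>; so the region
  is backward invariant and \<open>E\<close> converges at \<open>-\<infinity>\<close>. As \<open>E'\<close> dominates a multiple of the Lipschitz
  function \<open>sin\<^sup>2 \<phi>\<close>, Barbalat's lemma gives \<open>sin \<phi> \<rightarrow> 0\<close>, hence \<open>\<phi> \<rightarrow> \<pi>\<close>. Applied to \<open>\<phi>\<close> itself it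
  gives \<open>\<phi>' \<rightarrow> 0\<close>, and since \<open>\<phi>' = cos \<phi> (q cos\<^sup>2 \<vartheta> - p sin\<^sup>2 \<vartheta>) + O(sin \<phi>)\<close>, this forces
  \<open>tan\<^sup>2 \<vartheta> \<rightarrow> q / p\<close>.\<close>

lemma bounded_real_derivative_imp_lipschitz:
  fixes f :: "real \<Rightarrow> real"
  assumes deriv: "\<And>x. (f has_real_derivative f' x) (at x)" and bound: "\<And>x. \<bar>f' x\<bar> \<le> B"
  shows "B-lipschitz_on UNIV f"
proof (rule lipschitz_onI)
  show "0 \<le> B" using abs_ge_zero bound order_trans by blast
  fix x y :: real
  show "dist (f x) (f y) \<le> B * dist x y"
    using field_differentiable_bound[of UNIV f f' B x y] deriv bound by (simp add: dist_real_def)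
qed

definition bounded_lipschitz :: "('a::metric_space \<Rightarrow> real) \<Rightarrow> bool" where
  "bounded_lipschitz f \<longleftrightarrow> (\<exists>B. \<forall>x. \<bar>f x\<bar> \<le> B) \<and> (\<exists>L. L-lipschitz_on UNIV f)"

lemma bounded_lipschitz_const: "bounded_lipschitz (\<lambda>x. c)"
  unfolding bounded_lipschitz_def using lipschitz_on_constant by auto

lemma bounded_lipschitz_diff:
  assumes "bounded_lipschitz f" "bounded_lipschitz g"
  shows "bounded_lipschitz (\<lambda>x. f x - g x)"
proof -
  obtain A B where "\<And>x. \<bar>f x\<bar> \<le> A" "\<And>x. \<bar>g x\<bar> \<le> B"
    using assms unfolding bounded_lipschitz_def by auto
  then have "\<bar>f x - g x\<bar> \<le> A + B" for x
    by (smt (verit) abs_triangle_ineq4)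
  then show ?thesis
    using assms unfolding bounded_lipschitz_def by (auto intro: lipschitz_on_diff)
qed

lemma bounded_lipschitz_mult:
  assumes f: "bounded_lipschitz f" and g: "bounded_lipschitz g"
  shows "bounded_lipschitz (\<lambda>x. f x * g x)"
proof -
  obtain A B Lf Lg where A: "\<And>x. \<bar>f x\<bar> \<le> A" and B: "\<And>x. \<bar>g x\<bar> \<le> B"
    and Lf: "Lf-lipschitz_on UNIV f" and Lg: "Lg-lipschitz_on UNIV g"
    using f g unfolding bounded_lipschitz_def by auto
  have "(A * Lg + B * Lf)-lipschitz_on UNIV (\<lambda>x. f x * g x)"
  proof (rule lipschitz_onI)
    fix x y
    have "\<bar>f x * g x - f y * g y\<bar> = \<bar>f x * (g x - g y) + g y * (f x - f y)\<bar>"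
      by (simp add: algebra_simps)
    also have "\<dots> \<le> A * \<bar>g x - g y\<bar> + B * \<bar>f x - f y\<bar>"
      using A B
      by (auto simp: abs_mult intro!: abs_triangle_ineq[THEN order_trans] add_mono mult_right_mono)
    also have "\<dots> \<le> A * (Lg * dist x y) + B * (Lf * dist x y)"
      using lipschitz_onD[OF Lf, of x y] lipschitz_onD[OF Lg, of x y] A[of x] B[of x]
      by (intro add_mono mult_left_mono) (auto simp: dist_real_def)
    finally show "dist (f x * g x) (f y * g y) \<le> (A * Lg + B * Lf) * dist x y"
      by (simp add: dist_real_def algebra_simps)
    show "0 \<le> A * Lg + B * Lf"
      using A[of undefined] B[of undefined] lipschitz_on_nonneg[OF Lf] lipschitz_on_nonneg[OF Lg]
      by (meson abs_ge_zero add_nonneg_nonneg order_trans zero_le_mult_iff)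
  qed
  moreover have "\<bar>f x * g x\<bar> \<le> A * B" for x
    using A[of x] B[of x] by (simp add: abs_mult mult_mono')
  ultimately show ?thesis unfolding bounded_lipschitz_def by auto
qed

lemma bounded_lipschitz_sin:
  assumes "L-lipschitz_on UNIV f"
  shows "bounded_lipschitz (\<lambda>x. sin (f x))"
proof -
  have "1-lipschitz_on UNIV (sin :: real \<Rightarrow> real)"
    by (rule bounded_real_derivative_imp_lipschitz[where f' = cos]) (auto intro: abs_cos_le_one)
  then have "(1 * L)-lipschitz_on UNIV (\<lambda>x. sin (f x))"
    using assms by (intro lipschitz_on_compose2) (auto intro: lipschitz_on_subset)
  then show ?thesis unfolding bounded_lipschitz_def by (auto intro: abs_sin_le_one)
qed

lemma bounded_lipschitz_cos:
  assumes "L-lipschitz_on UNIV f"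
  shows "bounded_lipschitz (\<lambda>x. cos (f x))"
proof -
  have "1-lipschitz_on UNIV (cos :: real \<Rightarrow> real)"
    by (rule bounded_real_derivative_imp_lipschitz[where f' = "\<lambda>x. - sin x"])
      (auto intro: derivative_eq_intros)
  then have "(1 * L)-lipschitz_on UNIV (\<lambda>x. cos (f x))"
    using assms by (intro lipschitz_on_compose2) (auto intro: lipschitz_on_subset)
  then show ?thesis unfolding bounded_lipschitz_def by (auto intro: abs_cos_le_one)
qed

lemma barbalat_at_bot_eventually_less:
  fixes F F' g :: "real \<Rightarrow> real"
  assumes lim: "(F \<longlongrightarrow> c) at_bot"
    and deriv: "\<And>s. s \<le> s1 \<Longrightarrow> (F has_real_derivative F' s) (at s)"
    and lower: "\<And>s. s \<le> s1 \<Longrightarrow> g s \<le> F' s"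
    and lip: "L-lipschitz_on {..s1} g"
    and "0 < \<epsilon>"
  shows "\<forall>\<^sub>F s in at_bot. g s < \<epsilon>"
proof -
  define \<delta> where "\<delta> = \<epsilon> / (2 * (L + 1))"
  have L: "0 \<le> L" using lipschitz_on_nonneg[OF lip] .
  have "\<delta> > 0" using L \<open>0 < \<epsilon>\<close> by (simp add: \<delta>_def)
  have "\<forall>\<^sub>F s in at_bot. dist (F s) c < \<delta> * \<epsilon> / 4"
    using lim \<open>\<delta> > 0\<close> \<open>0 < \<epsilon>\<close> by (intro tendstoD) simp_all
  then obtain N where N: "\<And>s. s \<le> N \<Longrightarrow> \<bar>F s - c\<bar> < \<delta> * \<epsilon> / 4"
    by (auto simp: eventually_at_bot_linorder dist_real_def)
  have "g s < \<epsilon>" if s: "s \<le> min N s1 - \<delta>" for s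
  proof (rule ccontr)
    assume "\<not> g s < \<epsilon>"
    have F'_large: "\<epsilon> / 2 \<le> F' x" if "s \<le> x" "x \<le> s + \<delta>" for x
    proof -
      have "\<bar>g x - g s\<bar> \<le> L * \<bar>x - s\<bar>"
        using lipschitz_onD[OF lip, of x s] that s by (simp add: dist_real_def)
      also have "\<dots> \<le> (L + 1) * \<delta>" using that L by (intro mult_mono) auto
      also have "\<dots> = \<epsilon> / 2" using L by (simp add: \<delta>_def field_simps)
      finally show ?thesis using \<open>\<not> g s < \<epsilon>\<close> lower[of x] that s by linarith
    qed
    \<comment> \<open>a slope \<open>\<ge> \<epsilon>/2\<close> on an interval of length \<open>\<delta>\<close> contradicts \<open>\<bar>F - c\<bar> < \<delta>\<epsilon>/4\<close> there\<close>
    have "(\<lambda>x. F x - \<epsilon> / 2 * x) s \<le> (\<lambda>x. F x - \<epsilon> / 2 * x) (s + \<delta>)"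
    proof (rule DERIV_nonneg_imp_nondecreasing[of s "s + \<delta>" "\<lambda>x. F x - \<epsilon> / 2 * x"])
      fix x assume x: "s \<le> x" "x \<le> s + \<delta>"
      show "\<exists>y. ((\<lambda>x. F x - \<epsilon> / 2 * x) has_real_derivative y) (at x) \<and> 0 \<le> y"
        using x s F'_large[OF x]
        by (intro exI[of _ "F' x - \<epsilon> / 2"]) (auto intro!: derivative_eq_intros deriv)
    qed (use \<open>\<delta> > 0\<close> in simp)
    moreover have "\<bar>F s - c\<bar> < \<delta> * \<epsilon> / 4" "\<bar>F (s + \<delta>) - c\<bar> < \<delta> * \<epsilon> / 4"
      using N s \<open>\<delta> > 0\<close> by auto
    ultimately show False unfolding abs_less_iff by (simp add: distrib_left mult.commute[of \<epsilon> \<delta>])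
  qed
  then show ?thesis unfolding eventually_at_bot_linorder by blast
qed

lemma barbalat_at_bot:
  fixes F g :: "real \<Rightarrow> real"
  assumes lim: "(F \<longlongrightarrow> c) at_bot"
    and deriv: "\<And>s. s \<le> s1 \<Longrightarrow> (F has_real_derivative g s) (at s)"
    and lip: "L-lipschitz_on {..s1} g"
  shows "(g \<longlongrightarrow> 0) at_bot"
proof (rule tendstoI)
  fix \<epsilon> :: real assume "0 < \<epsilon>"
  have "\<forall>\<^sub>F s in at_bot. g s < \<epsilon>"
    using barbalat_at_bot_eventually_less[OF lim deriv _ lip \<open>0 < \<epsilon>\<close>] by simp
  moreover have "\<forall>\<^sub>F s in at_bot. - g s < \<epsilon>"
    using lip \<open>0 < \<epsilon>\<close>
    by (intro barbalat_at_bot_eventually_less[of "\<lambda>s. - F s" "- c" s1 "\<lambda>s. - g s"])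
      (auto intro: tendsto_minus lim derivative_intros deriv)
  ultimately show "\<forall>\<^sub>F s in at_bot. dist (g s) 0 < \<epsilon>"
    by eventually_elim (simp add: dist_real_def)
qed

lemma mono_on_bdd_below_tendsto_at_bot:
  fixes F :: "real \<Rightarrow> real"
  assumes mono: "mono_on {..s1} F" and bdd: "bdd_below (F ` {..s1})"
  shows "(F \<longlongrightarrow> Inf (F ` {..s1})) at_bot"
proof (rule tendstoI)
  fix \<epsilon> :: real assume "0 < \<epsilon>"
  then obtain t where t: "t \<le> s1" "F t < Inf (F ` {..s1}) + \<epsilon>"
    using cInf_lessD[of "F ` {..s1}" "Inf (F ` {..s1}) + \<epsilon>"] by auto
  have "dist (F s) (Inf (F ` {..s1})) < \<epsilon>" if "s \<le> t" for s
    using mono_onD[OF mono, of s t] cInf_lower[OF _ bdd, of "F s"] that t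
    by (auto simp: dist_real_def)
  then show "\<forall>\<^sub>F s in at_bot. dist (F s) (Inf (F ` {..s1})) < \<epsilon>"
    unfolding eventually_at_bot_linorder by blast
qed

lemma eventually_at_left_greater_if_deriv:
  fixes f :: "real \<Rightarrow> real"
  assumes deriv: "(f has_real_derivative D) (at x)" and "c \<le> f x" and "f x = c \<Longrightarrow> D < 0"
  shows "\<forall>\<^sub>F y in at_left x. c < f y"
proof (cases "f x = c")
  case True
  then obtain d where "0 < d" and d: "\<And>h. 0 < h \<Longrightarrow> h < d \<Longrightarrow> c < f (x - h)"
    using DERIV_neg_dec_left[OF deriv] assms(3) by auto
  have "\<forall>\<^sub>F y in at_left x. y \<in> {x - d<..<x}"
    using eventually_at_left_real \<open>0 < d\<close> by simp
  then show ?thesis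
  proof eventually_elim
    case (elim y)
    then show ?case using d[of "x - y"] by simp
  qed
next
  case False
  have "(f \<longlongrightarrow> f x) (at_left x)"
    using DERIV_isCont[OF deriv] by (simp add: isCont_def filterlim_at_split)
  then show ?thesis using False \<open>c \<le> f x\<close> by (intro order_tendstoD(1)) auto
qed

lemma eventually_at_left_less_if_deriv:
  fixes f :: "real \<Rightarrow> real"
  assumes "(f has_real_derivative D) (at x)" and "f x \<le> c" and "f x = c \<Longrightarrow> 0 < D"
  shows "\<forall>\<^sub>F y in at_left x. f y < c"
  using eventually_at_left_greater_if_deriv[of "\<lambda>y. - f y" "- D" x "- c"] assms
  by (auto intro: derivative_intros)

lemma backward_invariance:
  fixes A C :: "real set"
  assumes "open A" "closed C" "C \<subseteq> A" "s1 \<in> A"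
    and trap: "\<And>u. u \<le> s1 \<Longrightarrow> {u..s1} \<subseteq> A \<Longrightarrow> u \<in> C"
  shows "{..s1} \<subseteq> A"
proof (rule ccontr)
  assume "\<not> {..s1} \<subseteq> A"
  then obtain u where u: "u \<le> s1" "u \<notin> A" by auto
  define T where "T = {u..s1} - A"
  have "closed T" unfolding T_def using \<open>open A\<close> by (intro closed_Diff) auto
  moreover have "bdd_above T" "u \<in> T" using u by (auto simp: T_def)
  ultimately have "Sup T \<in> T" and u_le: "u \<le> Sup T"
    using closed_contains_Sup cSup_upper by blast+
  define m where "m = Sup T"
  have "m < s1" using \<open>Sup T \<in> T\<close> \<open>s1 \<in> A\<close> by (auto simp: m_def T_def order.order_iff_strict)
  have mem_C: "v \<in> C" if "m < v" "v \<le> s1" for v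
  proof (rule trap)
    show "{v..s1} \<subseteq> A"
    proof
      fix w assume w: "w \<in> {v..s1}"
      show "w \<in> A"
      proof (rule ccontr)
        assume "w \<notin> A"
        with w that u_le have "w \<in> T" by (auto simp: T_def m_def)
        then have "w \<le> m" unfolding m_def using \<open>bdd_above T\<close> by (rule cSup_upper)
        with w that show False by simp
      qed
    qed
  qed (use that in simp)
  have "\<forall>\<^sub>F v in at_right m. v \<in> C"
    using eventually_at_right_real[OF \<open>m < s1\<close>] by (rule eventually_mono) (simp add: mem_C)
  then have "m \<in> C"
    using \<open>closed C\<close> by (intro Lim_in_closed_set[of C "\<lambda>v. v" "at_right m" m]) auto
  then show False using \<open>C \<subseteq> A\<close> \<open>Sup T \<in> T\<close> by (auto simp: m_def T_def)
qed

lemma exp_le_if_neg_ln_le: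
  fixes x c M :: real
  assumes "0 < x" "0 < c" "- c * ln x \<le> M"
  shows "exp (- M / c) \<le> x"
proof -
  have "- M / c \<le> ln x" using assms by (simp add: field_simps)
  then show ?thesis using \<open>0 < x\<close> by (metis exp_le_cancel_iff exp_ln)
qed

locale trajectory =
  fixes p q :: nat and th al :: "real \<Rightarrow> real"
  assumes p_pos: "p \<ge> 1" and q_pos: "q \<ge> 1"
    and th_deriv: "\<And>s. (th has_real_derivative
                     3 * sin (th s) * cos (th s) * sin (al s - th s)) (at s)"
    and al_deriv: "\<And>s. (al has_real_derivative
                     real q * cos (al s) * cos (th s) - real p * sin (al s) * sin (th s)) (at s)"
begin

definition ph :: "real \<Rightarrow> real" where
  "ph s = al s - th s"

definition defect :: "real \<Rightarrow> real" where
  "defect x = real q * cos x ^ 2 - real p * sin x ^ 2"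

definition ph_rate :: "real \<Rightarrow> real" where
  "ph_rate s = cos (ph s) * defect (th s)
    - (real p + real q + 3) * sin (th s) * cos (th s) * sin (ph s)"

lemma th_deriv_ph: "(th has_real_derivative 3 * sin (th s) * cos (th s) * sin (ph s)) (at s)"
  using th_deriv by (simp add: ph_def)

lemma ph_deriv: "(ph has_real_derivative ph_rate s) (at s)"
proof -
  have "(ph has_real_derivative
      (q * cos (al s) * cos (th s) - p * sin (al s) * sin (th s))
      - 3 * sin (th s) * cos (th s) * sin (ph s)) (at s)"
    unfolding ph_def[abs_def] using al_deriv th_deriv by (auto intro!: derivative_intros)
  moreover have "cos (al s) = cos (th s) * cos (ph s) - sin (th s) * sin (ph s)"
    "sin (al s) = sin (th s) * cos (ph s) + cos (th s) * sin (ph s)"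
    using cos_add[of "th s" "ph s"] sin_add[of "th s" "ph s"] by (simp_all add: ph_def)
  ultimately show ?thesis
    by (simp add: ph_rate_def defect_def power2_eq_square algebra_simps)
qed

lemma th_lipschitz: "3-lipschitz_on UNIV th"
proof (rule bounded_real_derivative_imp_lipschitz[OF th_deriv])
  fix s
  have "\<bar>sin (th s) * cos (th s) * sin (al s - th s)\<bar> \<le> 1"
    unfolding abs_mult by (intro mult_le_one) auto
  then show "\<bar>3 * sin (th s) * cos (th s) * sin (al s - th s)\<bar> \<le> 3"
    by (simp add: abs_mult)
qed

lemma ph_lipschitz: "(real p + real q + 3)-lipschitz_on UNIV ph"
proof -
  have "(real p + real q)-lipschitz_on UNIV al"
  proof (rule bounded_real_derivative_imp_lipschitz[OF al_deriv])
    fix s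
    have "\<bar>cos (al s) * cos (th s)\<bar> \<le> 1" "\<bar>sin (al s) * sin (th s)\<bar> \<le> 1"
      unfolding abs_mult by (intro mult_le_one; simp)+
    then have "\<bar>real q * cos (al s) * cos (th s)\<bar> \<le> q" "\<bar>real p * sin (al s) * sin (th s)\<bar> \<le> p"
      by (simp_all add: abs_mult mult.assoc mult_left_le)
    then show "\<bar>real q * cos (al s) * cos (th s) - real p * sin (al s) * sin (th s)\<bar>
        \<le> real p + real q"
      by linarith
  qed
  from lipschitz_on_diff[OF this th_lipschitz] show ?thesis
    by (simp add: ph_def[abs_def])
qed

lemma th_continuous: "continuous_on UNIV th" and ph_continuous: "continuous_on UNIV ph"
  using lipschitz_on_continuous_on th_lipschitz ph_lipschitz by blast+

definition in_region :: "real \<Rightarrow> bool" where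
  "in_region s \<longleftrightarrow> 0 < th s \<and> th s < pi / 2 \<and> pi / 2 < ph s \<and> ph s < 3 * pi / 2"

lemma in_region_signs:
  assumes "in_region s"
  shows "0 < sin (th s)" "0 < cos (th s)" "cos (ph s) < 0"
proof -
  have "0 < cos (ph s - pi)" using assms unfolding in_region_def by (intro cos_gt_zero_pi) auto
  then show "cos (ph s) < 0" by simp
  show "0 < sin (th s)" "0 < cos (th s)"
    using assms unfolding in_region_def by (auto intro!: sin_gt_zero cos_gt_zero_pi)
qed

lemma open_region: "open {s. in_region s}"
  unfolding in_region_def
  by (intro open_Collect_conj open_Collect_less continuous_on_const th_continuous ph_continuous)

definition lyapunov :: "real \<Rightarrow> real" where
  "lyapunov s = - real p * ln (cos (th s)) - real q * ln (sin (th s)) - 3 * ln (- cos (ph s))"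

definition lyapunov_rate :: "real \<Rightarrow> real" where
  "lyapunov_rate s =
    3 * (real p + real q + 3) * sin (th s) * cos (th s) * sin (ph s) ^ 2 / - cos (ph s)"

lemma lyapunov_deriv:
  assumes "in_region s"
  shows "(lyapunov has_real_derivative lyapunov_rate s) (at s)"
proof -
  note signs = in_region_signs[OF assms]
  define th' where "th' = 3 * sin (th s) * cos (th s) * sin (ph s)"
  have "(lyapunov has_real_derivative
      - real p * (- sin (th s) * th' / cos (th s)) - real q * (cos (th s) * th' / sin (th s))
      - 3 * (sin (ph s) * ph_rate s / - cos (ph s))) (at s)" (is "(_ has_real_derivative ?D) _")
    unfolding lyapunov_def[abs_def] th'_def using signs
    by (auto intro!: derivative_eq_intros th_deriv_ph ph_deriv)
  moreover have "?D = lyapunov_rate s"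
    using signs unfolding lyapunov_rate_def ph_rate_def defect_def th'_def
    by (simp add: field_simps power2_eq_square)
  ultimately show ?thesis by simp
qed

lemma lyapunov_rate_nonneg: "in_region s \<Longrightarrow> 0 \<le> lyapunov_rate s"
  using in_region_signs[of s] unfolding lyapunov_rate_def by (intro divide_nonneg_pos) auto

lemma lyapunov_le:
  assumes "u \<le> t" "{u..t} \<subseteq> {s. in_region s}"
  shows "lyapunov u \<le> lyapunov t"
proof (rule DERIV_nonneg_imp_nondecreasing[OF assms(1)])
  fix x assume "u \<le> x" "x \<le> t"
  then have "in_region x" using assms(2) by auto
  then show "\<exists>y. (lyapunov has_real_derivative y) (at x) \<and> 0 \<le> y"
    using lyapunov_deriv lyapunov_rate_nonneg by blast
qed

lemma lyapunov_terms_nonneg: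
  assumes "in_region s"
  shows "0 \<le> - real p * ln (cos (th s))" "0 \<le> - real q * ln (sin (th s))"
    "0 \<le> - 3 * ln (- cos (ph s))"
proof -
  have "ln (cos (th s)) \<le> 0" "ln (sin (th s)) \<le> 0" "ln (- cos (ph s)) \<le> 0"
    using in_region_signs[OF assms] by (auto simp: ln_le_zero_iff)
  then show "0 \<le> - real p * ln (cos (th s))" "0 \<le> - real q * ln (sin (th s))"
    "0 \<le> - 3 * ln (- cos (ph s))"
    by (simp_all add: mult_nonneg_nonpos)
qed

lemma region_lower_bounds:
  assumes "in_region s" "lyapunov s \<le> M"
  shows "exp (- M / q) \<le> sin (th s)" "exp (- M / p) \<le> cos (th s)"
    "exp (- M / 3) \<le> - cos (ph s)"
proof -
  note signs = in_region_signs[OF assms(1)]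
  have "- real q * ln (sin (th s)) \<le> M" "- real p * ln (cos (th s)) \<le> M"
    "- 3 * ln (- cos (ph s)) \<le> M"
    using assms(2) lyapunov_terms_nonneg[OF assms(1)] unfolding lyapunov_def by linarith+
  then show "exp (- M / q) \<le> sin (th s)" "exp (- M / p) \<le> cos (th s)"
    "exp (- M / 3) \<le> - cos (ph s)"
    using signs p_pos q_pos by (intro exp_le_if_neg_ln_le; simp)+
qed

lemma cos_three_halves_pi: "cos (3 * pi / 2) = 0" and sin_three_halves_pi: "sin (3 * pi / 2) = - 1"
  by (metis cos_3over2_pi sin_3over2_pi times_divide_eq_left)+

lemma in_region_if_bounded_away:
  assumes "0 < sin (th s)" "0 < cos (th s)" "cos (ph s) < 0"
    and "0 \<le> th s" "th s \<le> pi / 2" "pi / 2 \<le> ph s" "ph s \<le> 3 * pi / 2"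
  shows "in_region s"
proof -
  have "th s \<noteq> 0" "th s \<noteq> pi / 2" "ph s \<noteq> pi / 2" "ph s \<noteq> 3 * pi / 2"
    using assms(1-3) by (metis less_irrefl sin_zero, metis less_irrefl cos_pi_half,
        metis less_irrefl cos_pi_half, metis less_irrefl cos_three_halves_pi)
  with assms(4-7) show ?thesis unfolding in_region_def by auto
qed

lemma region_backward_invariant:
  assumes "in_region s1" "s \<le> s1"
  shows "in_region s"
proof -
  define M where "M = lyapunov s1"
  define C where "C = {s. exp (- M / q) \<le> sin (th s) \<and> exp (- M / p) \<le> cos (th s) \<and>
    exp (- M / 3) \<le> - cos (ph s) \<and> 0 \<le> th s \<and> th s \<le> pi / 2 \<and> pi / 2 \<le> ph s \<and> ph s \<le> 3 * pi / 2}"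
  have "{..s1} \<subseteq> {s. in_region s}"
  proof (rule backward_invariance[OF open_region])
    have "continuous_on UNIV (\<lambda>s. sin (th s))" "continuous_on UNIV (\<lambda>s. cos (th s))"
      "continuous_on UNIV (\<lambda>s. - cos (ph s))"
      by (intro continuous_intros th_continuous ph_continuous)+
    then show "closed C"
      unfolding C_def
      by (intro closed_Collect_conj closed_Collect_le th_continuous ph_continuous
          continuous_on_const)
    show "C \<subseteq> {s. in_region s}"
    proof
      fix s assume "s \<in> C"
      then have "exp (- M / q) \<le> sin (th s)" "exp (- M / p) \<le> cos (th s)"
        "exp (- M / 3) \<le> - cos (ph s)"
        by (simp_all add: C_def)
      then have "0 < sin (th s)" "0 < cos (th s)" "cos (ph s) < 0"
        using exp_gt_zero[of "- M / q"] exp_gt_zero[of "- M / p"] exp_gt_zero[of "- M / 3"]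
        by linarith+
      with \<open>s \<in> C\<close> show "s \<in> {s. in_region s}"
        unfolding C_def by (auto intro!: in_region_if_bounded_away)
    qed
    fix u assume "u \<le> s1" "{u..s1} \<subseteq> {s. in_region s}"
    then have "in_region u" "lyapunov u \<le> M"
      unfolding M_def using lyapunov_le by auto
    then show "u \<in> C"
      unfolding C_def using region_lower_bounds[of u M] by (auto simp: in_region_def)
  qed (use assms in auto)
  then show ?thesis using assms by auto
qed

\<comment> \<open>On the boundary \<open>\<phi> = \<pi>/2\<close> resp. \<open>\<phi> = 3\<pi>/2\<close> the sign of \<open>\<phi>'\<close> pushes the past into the region.\<close>
lemma exists_region_before:
  assumes "0 < th s0" "th s0 < pi / 2" "th s0 + pi / 2 \<le> al s0" "al s0 \<le> th s0 + 3 * pi / 2"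
  obtains s1 where "s1 < s0" "in_region s1"
proof -
  have signs: "0 < sin (th s0)" "0 < cos (th s0)"
    using assms(1,2) by (auto intro!: sin_gt_zero cos_gt_zero_pi)
  have rate: "ph_rate s0 < 0" if "ph s0 = pi / 2"
    using signs unfolding ph_rate_def that by simp
  have rate': "0 < ph_rate s0" if "ph s0 = 3 * pi / 2"
    using signs unfolding ph_rate_def that cos_three_halves_pi sin_three_halves_pi by simp
  have "\<forall>\<^sub>F s in at_left s0. pi / 2 < ph s"
    using assms(3) rate
    by (intro eventually_at_left_greater_if_deriv[OF ph_deriv]) (auto simp: ph_def)
  moreover have "\<forall>\<^sub>F s in at_left s0. ph s < 3 * pi / 2"
    using assms(4) rate'
    by (intro eventually_at_left_less_if_deriv[OF ph_deriv]) (auto simp: ph_def)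
  moreover have "(th \<longlongrightarrow> th s0) (at_left s0)"
    using th_continuous by (simp add: continuous_on_def filterlim_at_split)
  then have "\<forall>\<^sub>F s in at_left s0. 0 < th s" "\<forall>\<^sub>F s in at_left s0. th s < pi / 2"
    using assms(1,2) by (blast intro: order_tendstoD)+
  moreover have "\<forall>\<^sub>F s in at_left s0. s < s0"
    by (simp add: eventually_at_filter)
  ultimately have "\<forall>\<^sub>F s in at_left s0. s < s0 \<and> in_region s"
    unfolding in_region_def by eventually_elim auto
  then show ?thesis using that eventually_happens'[of "at_left s0"] by auto
qed

end

locale trapped_trajectory = trajectory +
  fixes s1 :: real
  assumes region_s1: "in_region s1"
begin

lemma region_before: "s \<le> s1 \<Longrightarrow> in_region s"
  by (rule region_backward_invariant[OF region_s1])

lemma lyapunov_rate_lower_bound: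
  obtains K where "0 < K" "\<And>s. s \<le> s1 \<Longrightarrow> K * sin (ph s) ^ 2 \<le> lyapunov_rate s"
proof -
  define M where "M = lyapunov s1"
  define K where "K = 3 * (real p + real q + 3) * (exp (- M / q) * exp (- M / p))"
  have "K * sin (ph s) ^ 2 \<le> lyapunov_rate s" if "s \<le> s1" for s
  proof -
    note region = region_before[OF that]
    note signs = in_region_signs[OF region]
    define a where "a = 3 * (real p + real q + 3) * sin (ph s) ^ 2"
    have "0 \<le> a" by (simp add: a_def)
    have "lyapunov s \<le> M"
      unfolding M_def using that by (intro lyapunov_le) (auto intro: region_before)
    note lower = region_lower_bounds[OF region this]
    have "exp (- M / q) * exp (- M / p) \<le> sin (th s) * cos (th s)"
      using lower signs by (intro mult_mono) auto
    then have "a * (exp (- M / q) * exp (- M / p)) \<le> a * (sin (th s) * cos (th s))"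
      using \<open>0 \<le> a\<close> by (rule mult_left_mono)
    then have "K * sin (ph s) ^ 2 \<le> a * (sin (th s) * cos (th s))"
      by (simp add: K_def a_def mult_ac)
    also have "\<dots> \<le> a * (sin (th s) * cos (th s)) / - cos (ph s)"
    proof -
      have "a * (sin (th s) * cos (th s)) / 1 \<le> a * (sin (th s) * cos (th s)) / - cos (ph s)"
        using signs cos_ge_minus_one[of "ph s"] \<open>0 \<le> a\<close> by (intro divide_left_mono) auto
      then show ?thesis by simp
    qed
    also have "\<dots> = lyapunov_rate s" by (simp add: lyapunov_rate_def a_def mult_ac)
    finally show ?thesis .
  qed
  moreover have "0 < K" by (simp add: K_def)
  ultimately show thesis using that by blast
qed

lemma lyapunov_converges: "(lyapunov \<longlongrightarrow> Inf (lyapunov ` {..s1})) at_bot"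
proof (rule mono_on_bdd_below_tendsto_at_bot)
  show "mono_on {..s1} lyapunov"
    by (intro mono_onI lyapunov_le) (auto intro: region_before)
  have "0 \<le> lyapunov s" if "s \<le> s1" for s
    using lyapunov_terms_nonneg[OF region_before[OF that]] unfolding lyapunov_def by linarith
  then show "bdd_below (lyapunov ` {..s1})"
    by (auto intro!: bdd_belowI[of _ 0])
qed

lemma sin_ph_tendsto_zero: "((\<lambda>s. sin (ph s)) \<longlongrightarrow> 0) at_bot"
proof -
  obtain K where "0 < K" and rate_ge: "\<And>s. s \<le> s1 \<Longrightarrow> K * sin (ph s) ^ 2 \<le> lyapunov_rate s"
    using lyapunov_rate_lower_bound by blast
  have "bounded_lipschitz (\<lambda>s. K * sin (ph s) ^ 2)"
    unfolding power2_eq_square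
    by (intro bounded_lipschitz_mult bounded_lipschitz_const bounded_lipschitz_sin[OF ph_lipschitz])
  then obtain L where "L-lipschitz_on UNIV (\<lambda>s. K * sin (ph s) ^ 2)"
    unfolding bounded_lipschitz_def by auto
  then have lip: "L-lipschitz_on {..s1} (\<lambda>s. K * sin (ph s) ^ 2)"
    by (rule lipschitz_on_subset) simp
  show ?thesis
  proof (rule tendstoI)
    fix \<epsilon> :: real assume "0 < \<epsilon>"
    have "\<forall>\<^sub>F s in at_bot. K * sin (ph s) ^ 2 < K * \<epsilon>\<^sup>2"
      using lyapunov_deriv[OF region_before] rate_ge \<open>0 < K\<close> \<open>0 < \<epsilon>\<close>
      by (intro barbalat_at_bot_eventually_less[OF lyapunov_converges _ _ lip]) auto
    then show "\<forall>\<^sub>F s in at_bot. dist (sin (ph s)) 0 < \<epsilon>"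
    proof eventually_elim
      case (elim s)
      then have "\<bar>sin (ph s)\<bar>\<^sup>2 < \<epsilon>\<^sup>2" using \<open>0 < K\<close> by simp
      then have "\<bar>sin (ph s)\<bar> < \<epsilon>"
        using less_imp_le[OF \<open>0 < \<epsilon>\<close>] by (rule power_less_imp_less_base)
      then show ?case by simp
    qed
  qed
qed

lemma ph_tendsto: "(ph \<longlongrightarrow> pi) at_bot"
proof -
  have "\<forall>\<^sub>F s in at_bot. pi - arcsin (sin (ph s)) = ph s"
    unfolding eventually_at_bot_linorder
  proof (intro exI allI impI)
    fix s assume "s \<le> s1"
    then have "arcsin (sin (ph s - pi)) = ph s - pi"
      using region_before[OF \<open>s \<le> s1\<close>] unfolding in_region_def by (intro arcsin_sin) auto
    then show "pi - arcsin (sin (ph s)) = ph s" by (simp add: arcsin_minus)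
  qed
  moreover have "((\<lambda>s. pi - arcsin (sin (ph s))) \<longlongrightarrow> pi - arcsin 0) at_bot"
    by (intro tendsto_intros isCont_tendsto_compose[OF isCont_arcsin] sin_ph_tendsto_zero) auto
  ultimately show ?thesis by (simp add: tendsto_cong)
qed

lemma ph_rate_tendsto_zero: "(ph_rate \<longlongrightarrow> 0) at_bot"
proof -
  have "bounded_lipschitz ph_rate"
    unfolding ph_rate_def[abs_def] defect_def power2_eq_square
    by (intro bounded_lipschitz_mult bounded_lipschitz_diff bounded_lipschitz_const
        bounded_lipschitz_sin[OF th_lipschitz] bounded_lipschitz_cos[OF th_lipschitz]
        bounded_lipschitz_sin[OF ph_lipschitz] bounded_lipschitz_cos[OF ph_lipschitz])
  then obtain L where "L-lipschitz_on UNIV ph_rate"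
    unfolding bounded_lipschitz_def by auto
  then have lip: "L-lipschitz_on {..s1} ph_rate"
    by (rule lipschitz_on_subset) simp
  show ?thesis
    by (rule barbalat_at_bot[OF ph_tendsto _ lip]) (rule ph_deriv)
qed

lemma defect_tendsto_zero: "((\<lambda>s. defect (th s)) \<longlongrightarrow> 0) at_bot"
proof -
  have "((\<lambda>s. sin (th s) * cos (th s) * sin (ph s)) \<longlongrightarrow> 0) at_bot"
  proof (rule Lim_null_comparison[OF _ tendsto_rabs_zero[OF sin_ph_tendsto_zero]])
    have "\<bar>sin (th s) * cos (th s)\<bar> \<le> 1" for s
      unfolding abs_mult by (intro mult_le_one) auto
    then show "\<forall>\<^sub>F s in at_bot. norm (sin (th s) * cos (th s) * sin (ph s)) \<le> \<bar>sin (ph s)\<bar>"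
      by (intro always_eventually allI) (simp add: abs_mult mult_left_le_one_le)
  qed
  moreover have "((\<lambda>s. cos (ph s)) \<longlongrightarrow> - 1) at_bot"
    using tendsto_cos[OF ph_tendsto] by simp
  ultimately have "((\<lambda>s.
      (ph_rate s + (real p + real q + 3) * (sin (th s) * cos (th s) * sin (ph s))) / cos (ph s))
      \<longlongrightarrow> (0 + (real p + real q + 3) * 0) / - 1) at_bot"
    by (intro tendsto_intros ph_rate_tendsto_zero) auto
  moreover have "\<forall>\<^sub>F s in at_bot.
      (ph_rate s + (real p + real q + 3) * (sin (th s) * cos (th s) * sin (ph s))) / cos (ph s)
      = defect (th s)"
    unfolding eventually_at_bot_linorder
  proof (intro exI allI impI)
    fix s assume "s \<le> s1"
    then have "cos (ph s) \<noteq> 0" using in_region_signs(3)[OF region_before] by force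
    then show "(ph_rate s + (real p + real q + 3) * (sin (th s) * cos (th s) * sin (ph s)))
        / cos (ph s) = defect (th s)"
      by (simp add: ph_rate_def field_simps)
  qed
  ultimately show ?thesis by (simp add: tendsto_cong)
qed

\<comment> \<open>As \<open>sin\<^sup>2 + cos\<^sup>2 = 1\<close>, the defect determines \<open>tan\<^sup>2\<close>; it vanishes exactly at \<open>tan\<^sup>2 = q / p\<close>.\<close>
lemma th_tendsto: "(th \<longlongrightarrow> arctan (sqrt (q / p))) at_bot"
proof -
  have "\<forall>\<^sub>F s in at_bot. arctan (sqrt ((q - defect (th s)) / (p + defect (th s)))) = th s"
    unfolding eventually_at_bot_linorder
  proof (intro exI allI impI)
    fix s assume "s \<le> s1"
    then have region: "in_region s" by (rule region_before)
    note signs = in_region_signs[OF region]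
    have "q - defect (th s) = (p + q) * sin (th s) ^ 2"
      by (simp add: defect_def cos_squared_eq algebra_simps)
    moreover have "p + defect (th s) = (p + q) * cos (th s) ^ 2"
      by (simp add: defect_def sin_squared_eq algebra_simps)
    ultimately have "(q - defect (th s)) / (p + defect (th s)) = tan (th s) ^ 2"
      using p_pos by (simp add: tan_def power_divide)
    moreover have "0 < tan (th s)" using signs by (simp add: tan_def)
    ultimately show "arctan (sqrt ((q - defect (th s)) / (p + defect (th s)))) = th s"
      using region by (simp add: arctan_tan in_region_def)
  qed
  moreover have "((\<lambda>s. q - defect (th s)) \<longlongrightarrow> q) at_bot" "((\<lambda>s. p + defect (th s)) \<longlongrightarrow> p) at_bot"
    using tendsto_diff[OF tendsto_const defect_tendsto_zero]
      tendsto_add[OF tendsto_const defect_tendsto_zero]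
    by auto
  then have "((\<lambda>s. arctan (sqrt ((q - defect (th s)) / (p + defect (th s)))))
      \<longlongrightarrow> arctan (sqrt (q / p))) at_bot"
    using p_pos by (intro tendsto_intros) auto
  ultimately show ?thesis by (simp add: tendsto_cong)
qed

end


theorem lemma4p11:
  fixes p q :: nat and th al :: "real \<Rightarrow> real" and s0 :: real
  assumes "p \<ge> 1" and "q \<ge> 1"
    and th_deriv: "\<And>s. (th has_real_derivative
                     3 * sin (th s) * cos (th s) * sin (al s - th s)) (at s)"
    and al_deriv: "\<And>s. (al has_real_derivative
                     real q * cos (al s) * cos (th s) - real p * sin (al s) * sin (th s)) (at s)"
    and "0 < th s0" and "th s0 < pi / 2"
    and "th s0 + pi / 2 \<le> al s0" and "al s0 \<le> th s0 + 3 * pi / 2"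
  shows "((\<lambda>s. (th s, al s)) \<longlongrightarrow>
           (arctan (sqrt (real q / real p)), arctan (sqrt (real q / real p)) + pi)) at_bot"
proof -
  interpret trajectory p q th al
    by (rule trajectory.intro) (fact assms)+
  obtain s1 where "in_region s1"
    using exists_region_before[OF assms(5-8)] by blast
  then interpret trapped_trajectory p q th al s1
    by unfold_locales
  have "((\<lambda>s. th s + ph s) \<longlongrightarrow> arctan (sqrt (real q / real p)) + pi) at_bot"
    by (intro tendsto_add th_tendsto ph_tendsto)
  then have "(al \<longlongrightarrow> arctan (sqrt (real q / real p)) + pi) at_bot"
    by (simp add: ph_def)
  with th_tendsto show ?thesis
    by (rule tendsto_Pair)
qed

end
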